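(* There is an absolute constant $\kappa>0$ such that for all positive integers $c$ and $n$, every collection $\mathcal{D}$ of $n$ distinct unit disks in the plane in which at most $c$ disks have a point in common admits a stacking order $f$ with $$\mathrm{vis}(\mathcal{D},f)\ge \kappa\, \frac{v(c)\, n}{c}.$$ Moreover, this bound is asymptotically tight in the worst case: there is an absolute constant $K>0$ such that for all positive integers $c$ and $m$ there is a collection $\mathcal{D}$ of $n=mc$ distinct unit disks, at most $c$ of which have a point in common, such that $\mathrm{vis}(\mathcal{D},f)\le K\, v(c)\, n/c$ for every stacking order $f$ of $\mathcal{D}$.
   Context: A unit disk is a closed disk of radius $1$ in the plane. A stacking order of a finite collection $\mathcal{D}$ of $n$ distinct unit disks is a bijection $f:\mathcal{D}\to\{1,\dots,n\}$; $f(D)$ is regarded as the height of $D$, and the arrangement is viewed from below. A point $x$ on the boundary circle of $D\in\mathcal{D}$ is visible if $x$ does not lie in any disk $D'\in\mathcal{D}$ with $f(D')<f(D)$. The visible perimeter $\mathrm{vis}(\mathcal{D},f)$ is the total length of all visible boundary points, summed over all disks of $\mathcal{D}$. For a positive integer $k$, $v(k)=\inf_{|\mathcal{D}|=k}\max_f \mathrm{vis}(\mathcal{D},f)$, the infimum over all collections $\mathcal{D}$ of $k$ distinct unit disks in the plane and the maximum over all stacking orders $f$ of $\mathcal{D}$. *)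

theory Defs
  imports "HOL-Analysis.Analysis"
begin

text \<open>A unit disk is identified with its center z; the disk is cball z 1 in the complex plane.
A collection of distinct unit disks is a finite set of centers.\<close>

definition stacking_order :: "complex set \<Rightarrow> (complex \<Rightarrow> nat) \<Rightarrow> bool" where
  "stacking_order C f \<longleftrightarrow> bij_betw f C {1..card C}"

text \<open>Visible part of the boundary circle of the disk centered at z, in angle parametrisation
(the circle has radius 1, so arc length equals angle measure): the point z + cis t is visible
iff it lies in no disk of strictly smaller height.\<close>

definition visible_angles :: "complex set \<Rightarrow> (complex \<Rightarrow> nat) \<Rightarrow> complex \<Rightarrow> real set" where
  "visible_angles C f z =
     {t \<in> {0..<2*pi}. \<forall>w\<in>C. f w < f z \<longrightarrow> z + cis t \<notin> cball w 1}"

definition vis :: "complex set \<Rightarrow> (complex \<Rightarrow> nat) \<Rightarrow> real" where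
  "vis C f = (\<Sum>z\<in>C. measure lborel (visible_angles C f z))"

definition max_vis :: "complex set \<Rightarrow> real" where
  "max_vis C = Max {vis C f | f. stacking_order C f}"

definition v :: "nat \<Rightarrow> real" where
  "v k = Inf {max_vis C | C. finite C \<and> card C = k}"

definition depth_le :: "complex set \<Rightarrow> nat \<Rightarrow> bool" where
  "depth_le C c \<longleftrightarrow> (\<forall>p. card {z\<in>C. p \<in> cball z 1} \<le> c)"

end

theory Submission
  imports Defs
begin

text \<open>Disks whose centres are more than 2 apart never cover each other's boundary, so for far-apart
  configurations both the visible perimeter and its maximum over stacking orders are additive.

  Lower bound: cut the plane into squares of side 6/5 and colour them by their coordinates mod 3.
  Every disk centred in a square contains the square's centre, so a square holds at most c disks,
  and disks in distinct squares of one colour are far apart. Some colour carries n/9 of the disks,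
  and a square with k of them contributes at least v(k) >= k v(c) / (2c), because about c/k far-apart
  copies of a near-optimal k-configuration contain c disks.

  Upper bound: m far-apart translates of a near-optimal c-configuration.\<close>

definition far_apart :: "complex set \<Rightarrow> complex set \<Rightarrow> bool" where
  "far_apart A B \<longleftrightarrow> (\<forall>a\<in>A. \<forall>b\<in>B. 2 < dist a b)"

lemma far_apart_commute: "far_apart A B \<longleftrightarrow> far_apart B A"
  unfolding far_apart_def by (metis dist_commute)

lemma far_apart_disjoint: "far_apart A B \<Longrightarrow> A \<inter> B = {}"
  unfolding far_apart_def by force

lemma circle_point_notin_far_cball:
  assumes "2 < dist z w" shows "z + cis t \<notin> cball w 1"
proof
  assume "z + cis t \<in> cball w 1"
  then have "dist (z + cis t) w \<le> 1" by (simp add: dist_commute)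
  moreover have "dist (z + cis t) z = 1" by (simp add: dist_norm)
  ultimately show False
    using assms dist_triangle3[of z w "z + cis t"] by linarith
qed

lemma visible_angles_cong:
  assumes "z \<in> C" "\<And>w. w \<in> C \<Longrightarrow> h w < h z \<longleftrightarrow> g w < g z"
  shows "visible_angles C h z = visible_angles C g z"
  using assms unfolding visible_angles_def by blast

lemma vis_cong:
  assumes "\<And>w z. w \<in> C \<Longrightarrow> z \<in> C \<Longrightarrow> h w < h z \<longleftrightarrow> g w < g z"
  shows "vis C h = vis C g"
  unfolding vis_def using assms by (intro sum.cong refl, subst visible_angles_cong) auto

lemma visible_angles_Un_far_apart:
  assumes "far_apart A B" "z \<in> A"
  shows "visible_angles (A \<union> B) h z = visible_angles A h z"
  using assms circle_point_notin_far_cball unfolding visible_angles_def far_apart_def by blast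

lemma vis_Un_far_apart:
  assumes "finite A" "finite B" "far_apart A B"
  shows "vis (A \<union> B) h = vis A h + vis B h"
proof -
  have "vis (A \<union> B) h = (\<Sum>z\<in>A. measure lborel (visible_angles (A \<union> B) h z))
                        + (\<Sum>z\<in>B. measure lborel (visible_angles (B \<union> A) h z))"
    unfolding vis_def using assms far_apart_disjoint by (simp add: sum.union_disjoint Un_commute)
  also have "\<dots> = vis A h + vis B h"
    unfolding vis_def using assms(3) far_apart_commute
    by (simp add: visible_angles_Un_far_apart cong: sum.cong)
  finally show ?thesis .
qed

lemma stacking_order_exists: "finite C \<Longrightarrow> \<exists>f. stacking_order C f"
  unfolding stacking_order_def by (rule finite_same_card_bij) auto

lemma stacking_order_inj: "stacking_order C f \<Longrightarrow> inj_on f C"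
  unfolding stacking_order_def bij_betw_def by blast

lemma stacking_order_range: "stacking_order C f \<Longrightarrow> z \<in> C \<Longrightarrow> f z \<in> {1..card C}"
  unfolding stacking_order_def bij_betw_def by blast

lemma finite_vis_stacking_orders:
  assumes "finite C" shows "finite {vis C f | f. stacking_order C f}"
proof -
  have "{vis C f | f. stacking_order C f} \<subseteq> vis C ` (PiE C (\<lambda>_. {1..card C}))"
  proof
    fix x assume "x \<in> {vis C f | f. stacking_order C f}"
    then obtain f where f: "stacking_order C f" "x = vis C f" by auto
    have "restrict f C \<in> PiE C (\<lambda>_. {1..card C})" using f(1) stacking_order_range by auto
    moreover have "vis C f = vis C (restrict f C)" by (rule vis_cong) auto
    ultimately show "x \<in> vis C ` (PiE C (\<lambda>_. {1..card C}))" using f by auto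
  qed
  moreover have "finite (PiE C (\<lambda>_. {1..card C}))" using assms by (intro finite_PiE) auto
  ultimately show ?thesis by (meson finite_imageI finite_subset)
qed

lemma vis_le_max_vis: "finite C \<Longrightarrow> stacking_order C f \<Longrightarrow> vis C f \<le> max_vis C"
  unfolding max_vis_def by (rule Max_ge) (auto simp: finite_vis_stacking_orders)

lemma max_vis_attained:
  assumes "finite C"
  obtains f where "stacking_order C f" "vis C f = max_vis C"
proof -
  obtain f0 where "stacking_order C f0" using stacking_order_exists assms by blast
  then have "max_vis C \<in> {vis C f | f. stacking_order C f}"
    unfolding max_vis_def using assms by (intro Max_in) (auto simp: finite_vis_stacking_orders)
  then show ?thesis using that by auto
qed

lemma max_vis_nonneg: "finite C \<Longrightarrow> 0 \<le> max_vis C"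
  by (metis max_vis_attained vis_def sum_nonneg measure_nonneg)

lemma max_vis_empty: "max_vis {} = 0"
  by (metis finite.emptyI max_vis_attained sum.empty vis_def)

lemma stacking_order_of_inj:
  fixes h :: "complex \<Rightarrow> 'a::linorder"
  assumes fin: "finite C" and inj: "inj_on h C"
  obtains f where "stacking_order C f" "\<And>w z. w \<in> C \<Longrightarrow> z \<in> C \<Longrightarrow> f w < f z \<longleftrightarrow> h w < h z"
proof -
  define f where "f z = Suc (card {w\<in>C. h w < h z})" for z
  have mono: "f w < f z" if "w \<in> C" "z \<in> C" "h w < h z" for w z
  proof -
    have "{u\<in>C. h u < h w} \<subset> {u\<in>C. h u < h z}" using that by auto
    then show ?thesis unfolding f_def using fin by (simp add: psubset_card_mono)
  qed
  have ord: "f w < f z \<longleftrightarrow> h w < h z" if "w \<in> C" "z \<in> C" for w z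
  proof
    assume "f w < f z"
    show "h w < h z"
    proof (rule ccontr)
      assume "\<not> h w < h z"
      then consider "h z < h w" | "h z = h w" by (auto simp: not_less_iff_gr_or_eq)
      then show False
        using mono[of z w] that \<open>f w < f z\<close> inj_onD[OF inj, of z w] by cases auto
    qed
  qed (rule mono[OF that])
  have "inj_on f C"
  proof (rule inj_onI)
    fix w z assume "w \<in> C" "z \<in> C" "f w = f z"
    then have "h w = h z" using ord[of w z] ord[of z w] by (auto simp: linorder_neq_iff)
    then show "w = z" using inj_onD[OF inj] \<open>w \<in> C\<close> \<open>z \<in> C\<close> by blast
  qed
  moreover have "f ` C \<subseteq> {1..card C}"
  proof
    fix x assume "x \<in> f ` C"
    then obtain z where z: "z \<in> C" "x = f z" by blast
    have "{w\<in>C. h w < h z} \<subseteq> C - {z}" by blast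
    then have "card {w\<in>C. h w < h z} \<le> card C - 1"
      using card_mono[of "C - {z}"] fin z(1) by (simp add: card_Diff_singleton)
    moreover have "0 < card C" using fin z(1) card_gt_0_iff by blast
    ultimately show "x \<in> {1..card C}" unfolding z(2) f_def by simp
  qed
  ultimately have "f ` C = {1..card C}"
    using card_subset_eq[of "{1..card C}" "f ` C"] card_image[of f C] by simp
  then have "stacking_order C f"
    unfolding stacking_order_def bij_betw_def using \<open>inj_on f C\<close> by blast
  then show ?thesis using that ord by blast
qed

lemma vis_le_max_vis_of_inj:
  assumes fin: "finite C" and "inj_on h C" shows "vis C h \<le> max_vis C"
proof -
  obtain f where "stacking_order C f" "\<And>w z. w \<in> C \<Longrightarrow> z \<in> C \<Longrightarrow> f w < f z \<longleftrightarrow> h w < h z"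
    using stacking_order_of_inj assms by blast
  then have "vis C h = vis C f" by (metis vis_cong)
  then show "vis C h \<le> max_vis C" using vis_le_max_vis[OF fin] \<open>stacking_order C f\<close> by simp
qed

lemma two_pi_le_max_vis:
  assumes "finite C" "C \<noteq> {}" shows "2 * pi \<le> max_vis C"
proof -
  obtain f where f: "stacking_order C f" "vis C f = max_vis C" using max_vis_attained assms(1) by blast
  have "1 \<in> f ` C" using f(1) assms unfolding stacking_order_def bij_betw_def
    by (simp add: card_gt_0_iff Suc_leI)
  then obtain z where z: "z \<in> C" "f z = 1" by auto
  have "visible_angles C f z = {0..<2*pi}"
    unfolding visible_angles_def using z stacking_order_range[OF f(1)] by force
  then have "measure lborel (visible_angles C f z) = 2 * pi" by simp
  moreover have "measure lborel (visible_angles C f z) \<le> vis C f" unfolding vis_def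
    using z assms(1) by (intro member_le_sum) auto
  ultimately show ?thesis using f by simp
qed

definition stack_on_top :: "complex set \<Rightarrow> (complex \<Rightarrow> nat) \<Rightarrow> (complex \<Rightarrow> nat) \<Rightarrow> complex \<Rightarrow> nat" where
  "stack_on_top S f g z = (if z \<in> S then f z else card S + Suc (g z))"

lemma inj_on_stack_on_top:
  assumes "stacking_order S f" "inj_on g (C - S)"
  shows "inj_on (stack_on_top S f g) C"
proof (rule inj_onI)
  fix x y assume xy: "x \<in> C" "y \<in> C" "stack_on_top S f g x = stack_on_top S f g y"
  have "f x \<le> card S" if "x \<in> S" for x using stacking_order_range[OF assms(1) that] by simp
  then show "x = y"
    using xy inj_onD[OF stacking_order_inj[OF assms(1)]] inj_onD[OF assms(2)]
    unfolding stack_on_top_def by (cases "x \<in> S"; cases "y \<in> S") force+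
qed

lemma visible_angles_stack_on_top:
  assumes "S \<subseteq> C" "stacking_order S f" "z \<in> S"
  shows "visible_angles C (stack_on_top S f g) z = visible_angles S f z"
proof -
  have "f z \<le> card S" using stacking_order_range[OF assms(2,3)] by simp
  then show ?thesis
    using assms(1,3) unfolding visible_angles_def stack_on_top_def by auto
qed

lemma max_vis_mono:
  assumes fin: "finite C" and sub: "S \<subseteq> C"
  shows "max_vis S \<le> max_vis C"
proof -
  obtain f where f: "stacking_order S f" "vis S f = max_vis S"
    using max_vis_attained[OF finite_subset[OF sub fin]] by blast
  obtain g where "stacking_order (C - S) g" using stacking_order_exists fin by blast
  then have inj: "inj_on (stack_on_top S f g) C"
    using inj_on_stack_on_top f(1) stacking_order_inj by blast
  have "max_vis S = (\<Sum>z\<in>S. measure lborel (visible_angles C (stack_on_top S f g) z))"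
    using f unfolding vis_def by (simp add: visible_angles_stack_on_top[OF sub])
  also have "\<dots> \<le> vis C (stack_on_top S f g)"
    unfolding vis_def using fin sub by (intro sum_mono2) auto
  also have "\<dots> \<le> max_vis C" using vis_le_max_vis_of_inj fin inj by blast
  finally show ?thesis .
qed

lemma max_vis_Un_far_apart:
  assumes fA: "finite A" and fB: "finite B" and far: "far_apart A B"
  shows "max_vis (A \<union> B) = max_vis A + max_vis B"
proof (rule antisym)
  obtain f where f: "stacking_order (A \<union> B) f" "vis (A \<union> B) f = max_vis (A \<union> B)"
    using max_vis_attained[of "A \<union> B"] fA fB by blast
  have "vis A f \<le> max_vis A" "vis B f \<le> max_vis B"
    using vis_le_max_vis_of_inj fA fB stacking_order_inj[OF f(1)] inj_on_subset by blast+
  then show "max_vis (A \<union> B) \<le> max_vis A + max_vis B"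
    using f vis_Un_far_apart[OF fA fB far] by simp
next
  obtain fa where fa: "stacking_order A fa" "vis A fa = max_vis A" using max_vis_attained fA by blast
  obtain fb where fb: "stacking_order B fb" "vis B fb = max_vis B" using max_vis_attained fB by blast
  define h where "h = stack_on_top A fa fb"
  have "B \<inter> A = {}" using far_apart_disjoint[OF far] by blast
  then have "(A \<union> B) - A = B" by blast
  then have inj: "inj_on h (A \<union> B)"
    unfolding h_def using inj_on_stack_on_top[OF fa(1), of fb] stacking_order_inj[OF fb(1)] by simp
  have "vis A h = vis A fa" by (rule vis_cong) (auto simp: h_def stack_on_top_def)
  moreover have "vis B h = vis B fb"
    by (rule vis_cong) (use \<open>B \<inter> A = {}\<close> in \<open>auto simp: h_def stack_on_top_def\<close>)
  ultimately have "vis (A \<union> B) h = max_vis A + max_vis B"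
    using vis_Un_far_apart[OF fA fB far] fa fb by simp
  then show "max_vis A + max_vis B \<le> max_vis (A \<union> B)"
    using vis_le_max_vis_of_inj[OF _ inj] fA fB by simp
qed

lemma max_vis_UN_far_apart:
  assumes "finite I" "\<And>i. i \<in> I \<Longrightarrow> finite (A i)"
    "\<And>i j. i \<in> I \<Longrightarrow> j \<in> I \<Longrightarrow> i \<noteq> j \<Longrightarrow> far_apart (A i) (A j)"
  shows "max_vis (\<Union>i\<in>I. A i) = (\<Sum>i\<in>I. max_vis (A i))"
  using assms
proof (induction I rule: finite_induct)
  case empty
  show ?case by (simp add: max_vis_empty)
next
  case (insert i I)
  have "far_apart (A i) (\<Union>j\<in>I. A j)"
    using insert.prems(2) insert.hyps(2) unfolding far_apart_def by blast
  then show ?case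
    using insert by (simp add: max_vis_Un_far_apart)
qed

lemma max_vis_translate:
  assumes "finite C" shows "max_vis ((+) a ` C) = max_vis C"
proof -
  have le: "max_vis ((+) a ` C) \<le> max_vis C" if fin: "finite C" for a C
  proof -
    obtain f where f: "stacking_order ((+) a ` C) f" "vis ((+) a ` C) f = max_vis ((+) a ` C)"
      using max_vis_attained[OF finite_imageI[OF fin]] by blast
    have inj: "inj_on (f \<circ> (+) a) C"
      using stacking_order_inj[OF f(1)] by (auto simp: inj_on_def)
    have "visible_angles ((+) a ` C) f (a + z) = visible_angles C (f \<circ> (+) a) z" for z
    proof -
      have "a + z + cis t \<in> cball (a + w) 1 \<longleftrightarrow> z + cis t \<in> cball w 1" for t w
        by (simp add: dist_norm algebra_simps)
      then show ?thesis unfolding visible_angles_def by auto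
    qed
    then have "vis ((+) a ` C) f = vis C (f \<circ> (+) a)"
      unfolding vis_def by (subst sum.reindex) auto
    then show ?thesis using f vis_le_max_vis_of_inj[OF fin inj] by simp
  qed
  have "max_vis C = max_vis ((+) (- a) ` (+) a ` C)" by (simp add: image_image)
  then show ?thesis using le[of C a] le[of "(+) a ` C" "- a"] assms by simp
qed

lemma far_apart_translate_exists:
  assumes fA: "finite A" and fB: "finite B"
  shows "\<exists>a. far_apart A ((+) a ` B)"
proof
  define M where "M = (\<Sum>x\<in>A. norm x) + (\<Sum>y\<in>B. norm y) + 3"
  show "far_apart A ((+) (of_real M) ` B)"
    unfolding far_apart_def
  proof (intro ballI, elim imageE)
    fix x y b assume x: "x \<in> A" and y: "y \<in> B" and b: "b = of_real M + y"
    have "norm x \<le> (\<Sum>x\<in>A. norm x)" "norm y \<le> (\<Sum>y\<in>B. norm y)"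
      using fA fB x y by (auto intro: member_le_sum)
    moreover have "norm (of_real M :: complex) = M"
      unfolding M_def by (intro norm_of_real[THEN trans] abs_of_nonneg) (simp add: sum_nonneg)
    moreover have "norm (of_real M :: complex) \<le> norm (of_real M + y - x) + norm x + norm y"
      using norm_triangle_ineq[of "of_real M + y - x" "x - y"] norm_triangle_ineq4[of x y] by simp
    moreover have "dist x b = norm (of_real M + y - x)"
      unfolding b dist_norm by (rule norm_minus_commute)
    ultimately show "2 < dist x b" unfolding M_def by linarith
  qed
qed

lemma depth_le_card: "finite C \<Longrightarrow> depth_le C (card C)"
  unfolding depth_le_def by (auto intro: card_mono)

lemma depth_le_subset:
  assumes "depth_le C c" "S \<subseteq> C" "finite C" shows "depth_le S c"
  unfolding depth_le_def
proof
  fix p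
  have "card {z\<in>S. p \<in> cball z 1} \<le> card {z\<in>C. p \<in> cball z 1}"
    using assms(2,3) by (intro card_mono) auto
  then show "card {z\<in>S. p \<in> cball z 1} \<le> c"
    using assms(1) unfolding depth_le_def by (meson order_trans)
qed

lemma depth_le_translate:
  assumes "depth_le C c" shows "depth_le ((+) a ` C) c"
  unfolding depth_le_def
proof
  fix p
  have "{z \<in> (+) a ` C. p \<in> cball z 1} = (+) a ` {z\<in>C. p - a \<in> cball z 1}"
    by (auto simp: dist_norm algebra_simps image_iff)
  then have "card {z \<in> (+) a ` C. p \<in> cball z 1} = card {z\<in>C. p - a \<in> cball z 1}"
    by (simp add: card_image)
  then show "card {z \<in> (+) a ` C. p \<in> cball z 1} \<le> c"
    using assms unfolding depth_le_def by metis
qed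

lemma depth_le_Un_far_apart:
  assumes "depth_le A c" "depth_le B c" "far_apart A B"
  shows "depth_le (A \<union> B) c"
  unfolding depth_le_def
proof
  fix p
  have "{z \<in> A \<union> B. p \<in> cball z 1} = {z \<in> A. p \<in> cball z 1}
      \<or> {z \<in> A \<union> B. p \<in> cball z 1} = {z \<in> B. p \<in> cball z 1}"
  proof (cases "\<exists>z\<in>A. p \<in> cball z 1")
    case True
    then obtain a where a: "a \<in> A" "dist a p \<le> 1" by auto
    have "w \<notin> B" if "dist w p \<le> 1" for w
    proof -
      have "dist a w \<le> 2" using dist_triangle[of a w p] a(2) that by (simp add: dist_commute)
      then show ?thesis using a(1) assms(3) unfolding far_apart_def by force
    qed
    then show ?thesis by auto
  qed auto
  then show "card {z \<in> A \<union> B. p \<in> cball z 1} \<le> c"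
    using assms(1,2) unfolding depth_le_def by (elim disjE) simp_all
qed

lemma translated_copies:
  assumes fin: "finite C" and depth: "depth_le C c"
  shows "\<exists>U. finite U \<and> card U = n * card C \<and> max_vis U = n * max_vis C \<and> depth_le U c"
proof (induction n)
  case 0
  show ?case by (intro exI[of _ "{}"]) (simp add: max_vis_empty depth_le_def)
next
  case (Suc n)
  then obtain U where U: "finite U" "card U = n * card C" "max_vis U = n * max_vis C" "depth_le U c"
    by blast
  obtain a where far: "far_apart U ((+) a ` C)" using far_apart_translate_exists U(1) fin by blast
  define V where "V = (+) a ` C"
  have "finite V" "card V = card C" "max_vis V = max_vis C" "depth_le V c"
    unfolding V_def using fin max_vis_translate[OF fin] depth_le_translate[OF depth]
    by (simp_all add: card_image)
  moreover have "U \<inter> V = {}" using far_apart_disjoint far unfolding V_def by blast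
  ultimately have "card (U \<union> V) = Suc n * card C" "max_vis (U \<union> V) = Suc n * max_vis C"
    "depth_le (U \<union> V) c"
    using U far card_Un_disjoint[OF U(1)] max_vis_Un_far_apart[OF U(1)] depth_le_Un_far_apart
    unfolding V_def[symmetric] by (simp_all add: algebra_simps)
  then show ?case using U(1) \<open>finite V\<close> by blast
qed

lemma exists_finite_card: "\<exists>C::complex set. finite C \<and> card C = k"
  by (rule exI[of _ "of_nat ` {..<k}"]) (auto simp: card_image inj_on_def)

lemma bdd_below_max_vis: "bdd_below {max_vis C | C. finite C \<and> card C = k}"
  by (rule bdd_belowI[of _ 0]) (auto simp: max_vis_nonneg)

lemma v_le_max_vis: "finite C \<Longrightarrow> card C = k \<Longrightarrow> v k \<le> max_vis C"
  unfolding v_def by (rule cInf_lower[OF _ bdd_below_max_vis]) auto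

lemma v_le_max_vis_of_card_le:
  assumes "finite U" "k \<le> card U" shows "v k \<le> max_vis U"
proof -
  obtain S where S: "S \<subseteq> U" "card S = k"
    using obtain_subset_with_card_n[OF assms(2)] by blast
  then have "v k \<le> max_vis S" using v_le_max_vis finite_subset[OF S(1) assms(1)] by blast
  also have "\<dots> \<le> max_vis U" using max_vis_mono[OF assms(1) S(1)] .
  finally show ?thesis .
qed

lemma two_pi_le_v: assumes "1 \<le> k" shows "2 * pi \<le> v k"
  unfolding v_def
proof (rule cInf_greatest)
  show "{max_vis C |C. finite C \<and> card C = k} \<noteq> {}" using exists_finite_card by blast
next
  fix x assume "x \<in> {max_vis C |C. finite C \<and> card C = k}"
  then obtain C where C: "finite C" "card C = k" "x = max_vis C" by auto
  then have "C \<noteq> {}" using assms by auto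
  then show "2 * pi \<le> x" using two_pi_le_max_vis C by simp
qed

lemma exists_max_vis_less_v:
  assumes "0 < e" shows "\<exists>C. finite C \<and> card C = k \<and> max_vis C < v k + e"
proof -
  have "{max_vis C | C. finite C \<and> card C = k} \<noteq> {}" using exists_finite_card by blast
  moreover have "Inf {max_vis C | C. finite C \<and> card C = k} < v k + e" using assms v_def by simp
  ultimately obtain x where "x \<in> {max_vis C | C. finite C \<and> card C = k}" "x < v k + e"
    using cInf_less_iff[OF _ bdd_below_max_vis] by blast
  then show ?thesis by blast
qed

lemma v_le_mult:
  fixes c N k :: nat
  assumes "c \<le> N * k" shows "v c \<le> N * v k"
proof (rule field_le_epsilon)
  fix e :: real assume "0 < e"
  then obtain C where C: "finite C" "card C = k" "max_vis C < v k + e / Suc N"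
    using exists_max_vis_less_v by (metis divide_pos_pos of_nat_0_less_iff zero_less_Suc)
  obtain U where U: "finite U" "card U = N * k" "max_vis U = N * max_vis C"
    using translated_copies[OF C(1) depth_le_card[OF C(1)]] C(2) by blast
  have "c \<le> card U" using U(2) assms by simp
  then have "v c \<le> N * max_vis C" using v_le_max_vis_of_card_le[OF U(1)] U(3) by simp
  also have "\<dots> \<le> N * (v k + e / Suc N)" using C(3) by (intro mult_left_mono) auto
  also have "\<dots> \<le> N * v k + e"
    using \<open>0 < e\<close> by (simp add: distrib_left field_simps)
  finally show "v c \<le> N * v k + e" .
qed

lemma v_scaling:
  assumes "1 \<le> k" "k \<le> c" shows "real k * v c \<le> 2 * real c * v k"
proof -
  have "c \<le> (c div k + 1) * k" using assms by (simp add: dividend_less_div_times less_imp_le)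
  then have "v c \<le> (c div k + 1) * v k" using v_le_mult by blast
  moreover have "k * (c div k + 1) \<le> 2 * c"
  proof -
    have "k * (c div k + 1) = k * (c div k) + k" by (simp add: algebra_simps)
    then show ?thesis using assms(2) times_div_less_eq_dividend[of k c] by linarith
  qed
  moreover have "0 \<le> v k" using two_pi_le_v[OF assms(1)] pi_gt_zero by linarith
  ultimately have "k * v c \<le> k * ((c div k + 1) * v k)"
    by (intro mult_left_mono) auto
  also have "\<dots> = real (k * (c div k + 1)) * v k" by (simp add: algebra_simps)
  also have "\<dots> \<le> 2 * c * v k"
  proof -
    have "real (k * (c div k + 1)) \<le> real (2 * c)"
      using \<open>k * (c div k + 1) \<le> 2 * c\<close> by (rule of_nat_mono)
    then show ?thesis using mult_right_mono \<open>0 \<le> v k\<close> by fastforce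
  qed
  finally show ?thesis by simp
qed

text \<open>The squares have half-diagonal 3 sqrt 2 / 5 < 1, and two squares of the same class are at
  distance at least 2 * 6/5 > 2.\<close>

definition grid_cell :: "complex \<Rightarrow> int \<times> int" where
  "grid_cell z = (\<lfloor>5/6 * Re z\<rfloor>, \<lfloor>5/6 * Im z\<rfloor>)"

definition grid_class :: "complex \<Rightarrow> int \<times> int" where
  "grid_class z = (fst (grid_cell z) mod 3, snd (grid_cell z) mod 3)"

definition cell_center :: "int \<times> int \<Rightarrow> complex" where
  "cell_center k = Complex (6/5 * (real_of_int (fst k) + 1/2)) (6/5 * (real_of_int (snd k) + 1/2))"

lemma floor_mod_3_far:
  assumes "\<lfloor>x\<rfloor> mod 3 = \<lfloor>y\<rfloor> mod 3" "\<lfloor>x\<rfloor> \<noteq> \<lfloor>y::real\<rfloor>"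
  shows "2 < \<bar>x - y\<bar>"
proof -
  have "\<lfloor>x\<rfloor> + 3 \<le> \<lfloor>y\<rfloor> \<or> \<lfloor>y\<rfloor> + 3 \<le> \<lfloor>x\<rfloor>" using assms by presburger
  then show ?thesis by linarith
qed

lemma dist_gt_2_of_grid_class:
  assumes "grid_class z = grid_class w" "grid_cell z \<noteq> grid_cell w"
  shows "2 < dist z w"
proof -
  have "2 < \<bar>5/6 * Re z - 5/6 * Re w\<bar> \<or> 2 < \<bar>5/6 * Im z - 5/6 * Im w\<bar>"
    using assms floor_mod_3_far unfolding grid_class_def grid_cell_def by auto
  moreover have "\<bar>Re z - Re w\<bar> \<le> dist z w" "\<bar>Im z - Im w\<bar> \<le> dist z w"
    using abs_Re_le_cmod[of "z - w"] abs_Im_le_cmod[of "z - w"] by (auto simp: dist_norm)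
  ultimately show ?thesis by linarith
qed

lemma abs_sub_cell_midpoint: "\<bar>t - 6/5 * (real_of_int \<lfloor>5/6 * t\<rfloor> + 1/2)\<bar> \<le> 3/5"
proof -
  define f where "f = real_of_int \<lfloor>5/6 * t\<rfloor>"
  have "f \<le> 5/6 * t" "5/6 * t < f + 1" unfolding f_def by linarith+
  then show ?thesis unfolding f_def[symmetric] abs_le_iff by (auto simp: field_simps)
qed

lemma cell_center_in_cball: "cell_center (grid_cell z) \<in> cball z 1"
proof -
  define dx where "dx = Re z - Re (cell_center (grid_cell z))"
  define dy where "dy = Im z - Im (cell_center (grid_cell z))"
  have "\<bar>dx\<bar> \<le> 3/5" "\<bar>dy\<bar> \<le> 3/5"
    unfolding dx_def dy_def cell_center_def grid_cell_def
    using abs_sub_cell_midpoint[of "Re z"] abs_sub_cell_midpoint[of "Im z"] by simp_all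
  then have "dx\<^sup>2 + dy\<^sup>2 \<le> 1"
    using power_mono[of "\<bar>dx\<bar>" "3/5" 2] power_mono[of "\<bar>dy\<bar>" "3/5" 2] by (simp add: power_divide)
  moreover have "dist z (cell_center (grid_cell z)) = sqrt (dx\<^sup>2 + dy\<^sup>2)"
    unfolding dist_norm cmod_def dx_def dy_def by simp
  ultimately show ?thesis by simp
qed

lemma exists_large_fiber:
  assumes "finite Q" "Q \<noteq> {}" "finite C" "g ` C \<subseteq> Q"
  shows "\<exists>q\<in>Q. card C \<le> card Q * card {z\<in>C. g z = q}"
proof -
  let ?n = "\<lambda>q. card {z\<in>C. g z = q}"
  obtain q where q: "q \<in> Q" "\<And>q'. q' \<in> Q \<Longrightarrow> ?n q' \<le> ?n q"
    using Max_in[of "?n ` Q"] Max_ge[of "?n ` Q"] assms(1,2) by fastforce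
  have "C = (\<Union>q\<in>Q. {z\<in>C. g z = q})" using assms(4) by blast
  then have "card C \<le> (\<Sum>q'\<in>Q. ?n q')" using card_UN_le[OF assms(1)] by metis
  also have "\<dots> \<le> card Q * ?n q" using sum_bounded_above[of Q ?n "?n q"] q(2) by simp
  finally show ?thesis using q(1) by blast
qed

lemma v_mult_card_le_max_vis_of_grid_class:
  assumes fin: "finite S" and depth: "depth_le S c"
    and same_class: "\<And>z. z \<in> S \<Longrightarrow> grid_class z = q"
  shows "v c * card S \<le> 2 * real c * max_vis S"
proof -
  define A where "A k = {z\<in>S. grid_cell z = k}" for k
  have S_eq: "S = (\<Union>k\<in>grid_cell ` S. A k)" unfolding A_def by blast
  have fin_A: "finite (A k)" for k unfolding A_def using fin by simp
  have "max_vis S = (\<Sum>k\<in>grid_cell ` S. max_vis (A k))"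
    using fin fin_A same_class dist_gt_2_of_grid_class
    by (subst S_eq, intro max_vis_UN_far_apart) (auto simp: far_apart_def A_def)
  moreover have "card S = (\<Sum>k\<in>grid_cell ` S. card (A k))"
    using fin fin_A by (subst S_eq, intro card_UN_disjoint) (auto simp: A_def)
  moreover have "v c * card (A k) \<le> 2 * real c * max_vis (A k)" if "k \<in> grid_cell ` S" for k
  proof -
    have "1 \<le> card (A k)" using that fin_A by (auto simp: A_def Suc_le_eq card_gt_0_iff)
    moreover have "A k \<subseteq> {z\<in>S. cell_center k \<in> cball z 1}"
      unfolding A_def using cell_center_in_cball by blast
    then have "card (A k) \<le> card {z\<in>S. cell_center k \<in> cball z 1}"
      using fin by (intro card_mono) auto
    then have "card (A k) \<le> c" using depth unfolding depth_le_def by (metis order_trans)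
    ultimately have "card (A k) * v c \<le> 2 * real c * v (card (A k))" by (rule v_scaling)
    also have "\<dots> \<le> 2 * real c * max_vis (A k)"
      using v_le_max_vis[OF fin_A refl] by (intro mult_left_mono) auto
    finally show ?thesis by (simp add: mult.commute)
  qed
  ultimately show ?thesis
    by (simp add: of_nat_sum sum_distrib_left sum_mono)
qed

lemma exists_stacking_order_vis_ge:
  assumes fin: "finite C" and depth: "depth_le C c" and "0 < c"
  shows "\<exists>f. stacking_order C f \<and> v c * card C \<le> 18 * real c * vis C f"
proof -
  have "grid_class ` C \<subseteq> {0..2} \<times> {0..2}"
    unfolding grid_class_def by auto
  then obtain q where "card C \<le> 9 * card {z\<in>C. grid_class z = q}"
    using exists_large_fiber[of "{0..2} \<times> {0..2}" C grid_class] fin by auto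
  moreover define S where "S = {z\<in>C. grid_class z = q}"
  ultimately have card_C: "real (card C) \<le> 9 * card S" by simp
  have "S \<subseteq> C" "finite S" unfolding S_def using fin by auto
  then have "v c * card S \<le> 2 * real c * max_vis S"
    using depth_le_subset[OF depth _ fin]
    by (intro v_mult_card_le_max_vis_of_grid_class) (auto simp: S_def)
  also have "\<dots> \<le> 2 * real c * max_vis C"
    using max_vis_mono[OF fin \<open>S \<subseteq> C\<close>] by (intro mult_left_mono) auto
  finally have "v c * card S \<le> 2 * real c * max_vis C" .
  moreover have "0 \<le> v c" using two_pi_le_v[of c] \<open>0 < c\<close> pi_gt_zero by linarith
  ultimately have "v c * card C \<le> 18 * real c * max_vis C"
    using mult_left_mono[OF card_C \<open>0 \<le> v c\<close>] by linarith
  moreover obtain f where "stacking_order C f" "vis C f = max_vis C"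
    using max_vis_attained[OF fin] by blast
  ultimately show ?thesis by auto
qed

lemma exists_configuration_vis_le:
  assumes "0 < c"
  shows "\<exists>C. finite C \<and> card C = m * c \<and> depth_le C c \<and>
           (\<forall>f. stacking_order C f \<longrightarrow> vis C f \<le> 2 * real m * v c)"
proof -
  have "0 < v c" using two_pi_le_v[of c] assms pi_gt_zero by linarith
  then obtain C0 where C0: "finite C0" "card C0 = c" "max_vis C0 < 2 * v c"
    using exists_max_vis_less_v[of "v c" c] by auto
  then obtain U where U: "finite U" "card U = m * c" "max_vis U = m * max_vis C0" "depth_le U c"
    using translated_copies[OF C0(1) depth_le_card[OF C0(1)]] by auto
  have "vis U f \<le> 2 * real m * v c" if "stacking_order U f" for f
  proof -
    have "vis U f \<le> m * max_vis C0" using vis_le_max_vis[OF U(1) that] U(3) by simp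
    also have "\<dots> \<le> m * (2 * v c)" using C0(3) by (intro mult_left_mono) auto
    finally show ?thesis by simp
  qed
  then show ?thesis using U by blast
qed

theorem theorem6:
  shows "(\<exists>\<kappa>>0. \<forall>c n::nat. 0 < c \<longrightarrow> 0 < n \<longrightarrow>
            (\<forall>C. finite C \<and> card C = n \<and> depth_le C c \<longrightarrow>
               (\<exists>f. stacking_order C f \<and> vis C f \<ge> \<kappa> * v c * real n / real c)))
       \<and> (\<exists>K>0. \<forall>c m::nat. 0 < c \<longrightarrow> 0 < m \<longrightarrow>
            (\<exists>C. finite C \<and> card C = m * c \<and> depth_le C c \<and>
               (\<forall>f. stacking_order C f \<longrightarrow> vis C f \<le> K * v c * real (m * c) / real c)))"
proof (rule conjI[OF exI[of _ "1/18"] exI[of _ 2]]; intro conjI allI impI)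
  fix c n :: nat and C :: "complex set"
  assume "0 < c" "0 < n" "finite C \<and> card C = n \<and> depth_le C c"
  then obtain f where "stacking_order C f" "v c * n \<le> 18 * real c * vis C f"
    using exists_stacking_order_vis_ge by blast
  then show "\<exists>f. stacking_order C f \<and> 1/18 * v c * real n / real c \<le> vis C f"
    using \<open>0 < c\<close> by (auto simp: field_simps)
next
  fix c m :: nat assume "0 < c" "0 < m"
  then show "\<exists>C. finite C \<and> card C = m * c \<and> depth_le C c \<and>
               (\<forall>f. stacking_order C f \<longrightarrow> vis C f \<le> 2 * v c * real (m * c) / real c)"
    using exists_configuration_vis_le[of c m] by (simp add: mult.commute mult.left_commute)
qed simp_all

end
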